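(* Given a Stackelberg game $(G,L,F)$ and $\lambda=[\lambda_p]_{p\in L}\in[0,1]^{|L|}$, the problem o-SCE($\lambda$) — find an SCE $\mathbf{x}=[x_\pi]\in\mathbf{X}^{SCE}$ maximizing $f_\lambda(\mathbf{x})=\sum_{p\in L}\sum_{s\in S}\lambda_p u_p(s)x_\varnothing(s)$ among all SCEs — can be solved with $|L|+2$ queries to a stability oracle $\mathcal{O}$ for $G$ (and no other access to the game beyond trivial bookkeeping).
   Context: A finite game is $G=(N,\{S_p\}_{p\in N},\{u_p\}_{p\in N})$ with players $N=\{1,\dots,n\}$, finite nonempty strategy sets $S_p$, and utilities $u_p:S\to\mathbb{R}$ on $S=\prod_{p\in N}S_p$; write $s=(s_p,s_{-p})$ with $s_{-p}\in S_{-p}=\prod_{q\neq p}S_q$. $\mathcal{X}=\Delta(S)$ is the set of probability distributions on $S$ and $u_p(x)=\sum_{s\in S}x(s)u_p(s)$ for $x\in\mathcal{X}$. For $P\subseteq N$, $\mathcal{X}^{CE}_P$ is the set of $x\in\mathcal{X}$ such that for every $p\in P$ and all $s_p\neq s_p'\in S_p$: $\sum_{s_{-p}\in S_{-p}} x(s_p,s_{-p})\,(u_p(s_p,s_{-p})-u_p(s_p',s_{-p}))\ge 0$; $\mathcal{X}^{CE}=\mathcal{X}^{CE}_N$ is the set of correlated equilibria of $G$. A Stackelberg game (SG) is a triple $(G,L,F)$ with $L\cup F=N$ and $L\cap F=\emptyset$ (leaders and followers). For $P\subseteq N$, $\Pi_P$ is the set of ordered subsets of $P$ (finite sequences of pairwise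 distinct elements of $P$, including the empty sequence $\varnothing$); for $\pi\in\Pi_P$ and $p\in P$ not occurring in $\pi$, $\pi p$ is $\pi$ with $p$ appended; when used as a set, $\pi$ means its set of entries. $\mathbf{X}=\prod_{\pi\in\Pi_L}\mathcal{X}^{CE}_{\pi\cup F}$, with elements $\mathbf{x}=[x_\pi]_{\pi\in\Pi_L}$. For $\mathbf{x}\in\mathbf{X}$ and $\pi\in\Pi_L$, $x_\pi$ is stable if $u_p(x_\pi)\ge u_p(x_{\pi p})$ for all $p\in L\setminus\pi$; $\mathbf{x}$ is stable if $x_\varnothing$ is stable, and perfectly stable if $x_\pi$ is stable for every $\pi\in\Pi_L$; $\mathbf{X}^{S}$ and $\mathbf{X}^{PS}$ denote the sets of stable and perfectly stable elements of $\mathbf{X}$. For $\mathbf{X}'\subseteq\mathbf{X}$ and $\pi\in\Pi_L$, $\mathcal{P}_{L\setminus\pi}(\mathbf{X}')$ is the set of Pareto optimal elements of $\{x'_\pi:\mathbf{x}'\in\mathbf{X}'\}$ with respect to the objectives $u_p$, $p\in L\setminus\pi$ (an element $y$ of the set is Pareto optimal if no $y'$ in the set satisfies $u_p(y')\ge u_p(y)$ for all $p\in L\setminus\pi$ with strict inequality for some such $p$). $\mathbf{x}\in\mathbf{X}$ is an SCE if $\mathbf{x}\in\mathbf{X}^S$ and $x_\varnothing\in\mathcal{P}_L(\mathbf{X}^S)$; $\mathbf{X}^{SCE}$ is the set of SCEs. A stability oracle $\mathcal{O}(G,c,L^\ast,\{x_p\}_{p\in L'})$ is an algorithm that, given the game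 $G$, a coefficient vector $c=[c_p]\in[-1,1]^n$, a set $L^\ast\subseteq N$, and distributions $x_p\in\mathcal{X}$ for $p$ in some $L'\subseteq L^\ast$, returns some $x\in\mathcal{X}^{CE}_{N\setminus L^\ast}$ maximizing $\sum_{p\in N}\sum_{s\in S}c_pu_p(s)x(s)$ subject to the stability constraints $u_p(x)\ge u_p(x_p)$ for all $p\in L'$. *)

theory Defs
  imports Complex_Main "HOL-Library.FuncSet"
begin

(* Players are 0..<n; a strategy profile is an element of PiE {..<n} Sp;
   u p s is the utility of player p at profile s. *)
type_synonym 'a dist = "(nat \<Rightarrow> 'a) \<Rightarrow> real"
type_synonym 'a query = "(nat \<Rightarrow> real) \<times> nat set \<times> (nat \<Rightarrow> 'a dist option)"
type_synonym 'a transcript = "('a query \<times> 'a dist) list"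

definition profiles :: "nat \<Rightarrow> (nat \<Rightarrow> 'a set) \<Rightarrow> (nat \<Rightarrow> 'a) set" where
  "profiles n Sp = PiE {..<n} Sp"

definition finite_game :: "nat \<Rightarrow> (nat \<Rightarrow> 'a set) \<Rightarrow> bool" where
  "finite_game n Sp \<longleftrightarrow> 0 < n \<and> (\<forall>p<n. finite (Sp p) \<and> Sp p \<noteq> {})"

definition is_dist :: "nat \<Rightarrow> (nat \<Rightarrow> 'a set) \<Rightarrow> 'a dist \<Rightarrow> bool" where
  "is_dist n Sp x \<longleftrightarrow> (\<forall>s. s \<notin> profiles n Sp \<longrightarrow> x s = 0)
     \<and> (\<forall>s\<in>profiles n Sp. 0 \<le> x s) \<and> (\<Sum>s\<in>profiles n Sp. x s) = 1"

definition EU :: "nat \<Rightarrow> (nat \<Rightarrow> 'a set) \<Rightarrow> (nat \<Rightarrow> (nat \<Rightarrow> 'a) \<Rightarrow> real) \<Rightarrow> nat \<Rightarrow> 'a dist \<Rightarrow> real" where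
  "EU n Sp u p x = (\<Sum>s\<in>profiles n Sp. x s * u p s)"

definition CE_P :: "nat \<Rightarrow> (nat \<Rightarrow> 'a set) \<Rightarrow> (nat \<Rightarrow> (nat \<Rightarrow> 'a) \<Rightarrow> real) \<Rightarrow> nat set \<Rightarrow> 'a dist set" where
  "CE_P n Sp u P = {x. is_dist n Sp x \<and>
     (\<forall>p\<in>P. \<forall>a\<in>Sp p. \<forall>b\<in>Sp p. a \<noteq> b \<longrightarrow>
        0 \<le> (\<Sum>s\<in>{s\<in>profiles n Sp. s p = a}. x s * (u p s - u p (s(p := b)))))}"

definition ordered_subsets :: "nat set \<Rightarrow> nat list set" where
  "ordered_subsets L = {\<pi>. distinct \<pi> \<and> set \<pi> \<subseteq> L}"

(* bold X; followers F = N - L *)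
definition bigX :: "nat \<Rightarrow> (nat \<Rightarrow> 'a set) \<Rightarrow> (nat \<Rightarrow> (nat \<Rightarrow> 'a) \<Rightarrow> real) \<Rightarrow> nat set
    \<Rightarrow> (nat list \<Rightarrow> 'a dist) set" where
  "bigX n Sp u L = {x. \<forall>\<pi>\<in>ordered_subsets L. x \<pi> \<in> CE_P n Sp u (set \<pi> \<union> ({..<n} - L))}"

definition stable_at :: "nat \<Rightarrow> (nat \<Rightarrow> 'a set) \<Rightarrow> (nat \<Rightarrow> (nat \<Rightarrow> 'a) \<Rightarrow> real) \<Rightarrow> nat set
    \<Rightarrow> (nat list \<Rightarrow> 'a dist) \<Rightarrow> nat list \<Rightarrow> bool" where
  "stable_at n Sp u L x \<pi> \<longleftrightarrow> (\<forall>p\<in>L - set \<pi>. EU n Sp u p (x \<pi>) \<ge> EU n Sp u p (x (\<pi> @ [p])))"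

definition XS :: "nat \<Rightarrow> (nat \<Rightarrow> 'a set) \<Rightarrow> (nat \<Rightarrow> (nat \<Rightarrow> 'a) \<Rightarrow> real) \<Rightarrow> nat set
    \<Rightarrow> (nat list \<Rightarrow> 'a dist) set" where
  "XS n Sp u L = {x \<in> bigX n Sp u L. stable_at n Sp u L x []}"

definition pareto_set :: "nat \<Rightarrow> (nat \<Rightarrow> 'a set) \<Rightarrow> (nat \<Rightarrow> (nat \<Rightarrow> 'a) \<Rightarrow> real) \<Rightarrow> nat set
    \<Rightarrow> 'a dist set \<Rightarrow> 'a dist set" where
  "pareto_set n Sp u P Y = {y \<in> Y. \<not> (\<exists>y'\<in>Y. (\<forall>p\<in>P. EU n Sp u p y' \<ge> EU n Sp u p y)
                                          \<and> (\<exists>p\<in>P. EU n Sp u p y' > EU n Sp u p y))}"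

definition pareto_proj :: "nat \<Rightarrow> (nat \<Rightarrow> 'a set) \<Rightarrow> (nat \<Rightarrow> (nat \<Rightarrow> 'a) \<Rightarrow> real) \<Rightarrow> nat set
    \<Rightarrow> nat list \<Rightarrow> (nat list \<Rightarrow> 'a dist) set \<Rightarrow> 'a dist set" where
  "pareto_proj n Sp u L \<pi> X' = pareto_set n Sp u (L - set \<pi>) ((\<lambda>x'. x' \<pi>) ` X')"

definition XSCE :: "nat \<Rightarrow> (nat \<Rightarrow> 'a set) \<Rightarrow> (nat \<Rightarrow> (nat \<Rightarrow> 'a) \<Rightarrow> real) \<Rightarrow> nat set
    \<Rightarrow> (nat list \<Rightarrow> 'a dist) set" where
  "XSCE n Sp u L = {x \<in> XS n Sp u L. x [] \<in> pareto_proj n Sp u L [] (XS n Sp u L)}"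

definition f_lambda :: "nat \<Rightarrow> (nat \<Rightarrow> 'a set) \<Rightarrow> (nat \<Rightarrow> (nat \<Rightarrow> 'a) \<Rightarrow> real) \<Rightarrow> nat set
    \<Rightarrow> (nat \<Rightarrow> real) \<Rightarrow> (nat list \<Rightarrow> 'a dist) \<Rightarrow> real" where
  "f_lambda n Sp u L lam x = (\<Sum>p\<in>L. \<Sum>s\<in>profiles n Sp. lam p * u p s * x [] s)"

(* Stability oracle for G: on every admissible query (c, Lstar, x_p for p in L')
   (encoded as partial map with domain L' contained in Lstar), whenever the optimisation
   problem has an optimal solution, the oracle returns one. *)
definition oracle_feasible :: "nat \<Rightarrow> (nat \<Rightarrow> 'a set) \<Rightarrow> (nat \<Rightarrow> (nat \<Rightarrow> 'a) \<Rightarrow> real)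
    \<Rightarrow> nat set \<Rightarrow> (nat \<Rightarrow> 'a dist option) \<Rightarrow> 'a dist set" where
  "oracle_feasible n Sp u Ls xs = {x \<in> CE_P n Sp u ({..<n} - Ls).
      \<forall>p xp. xs p = Some xp \<longrightarrow> EU n Sp u p x \<ge> EU n Sp u p xp}"

definition oracle_obj :: "nat \<Rightarrow> (nat \<Rightarrow> 'a set) \<Rightarrow> (nat \<Rightarrow> (nat \<Rightarrow> 'a) \<Rightarrow> real)
    \<Rightarrow> (nat \<Rightarrow> real) \<Rightarrow> 'a dist \<Rightarrow> real" where
  "oracle_obj n Sp u c x = (\<Sum>p<n. \<Sum>s\<in>profiles n Sp. c p * u p s * x s)"

definition stability_oracle :: "nat \<Rightarrow> (nat \<Rightarrow> 'a set) \<Rightarrow> (nat \<Rightarrow> (nat \<Rightarrow> 'a) \<Rightarrow> real)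
    \<Rightarrow> ('a query \<Rightarrow> 'a dist) \<Rightarrow> bool" where
  "stability_oracle n Sp u Orc \<longleftrightarrow>
    (\<forall>c Ls xs. (\<forall>p<n. \<bar>c p\<bar> \<le> 1) \<longrightarrow> Ls \<subseteq> {..<n} \<longrightarrow> dom xs \<subseteq> Ls \<longrightarrow>
       (\<forall>p xp. xs p = Some xp \<longrightarrow> is_dist n Sp xp) \<longrightarrow>
       (\<exists>z\<in>oracle_feasible n Sp u Ls xs. \<forall>z'\<in>oracle_feasible n Sp u Ls xs.
           oracle_obj n Sp u c z' \<le> oracle_obj n Sp u c z) \<longrightarrow>
       Orc (c, Ls, xs) \<in> oracle_feasible n Sp u Ls xs \<and>
       (\<forall>z'\<in>oracle_feasible n Sp u Ls xs. oracle_obj n Sp u c z' \<le> oracle_obj n Sp u c (Orc (c, Ls, xs))))"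

(* Adaptive interaction: the algorithm chooses the next query (or stops) from
   the transcript of previous queries/answers; run with a budget of k queries. *)
fun run :: "('a transcript \<Rightarrow> 'a query option) \<Rightarrow> ('a query \<Rightarrow> 'a dist) \<Rightarrow> nat
    \<Rightarrow> 'a transcript \<Rightarrow> 'a transcript" where
  "run nxt Orc 0 tr = tr"
| "run nxt Orc (Suc k) tr = (case nxt tr of None \<Rightarrow> tr
                           | Some q \<Rightarrow> run nxt Orc k (tr @ [(q, Orc q)]))"

end

theory Submission
  imports Defs "HOL-Library.Nat_Bijection"
begin

text \<open>The root \<open>x []\<close> of a stable profile can be any correlated distribution \<open>x\<close> that is an
  equilibrium for the followers and gives every leader \<open>p\<close> at least its punishment value, the
  least payoff \<open>p\<close> can get in an equilibrium for \<open>{p} \<union> F\<close>: stability forces this bound, and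
  conversely such an \<open>x\<close> extends to a stable profile by choosing punishing equilibria as the
  \<open>x [p]\<close>. So \<open>|L|\<close> oracle calls compute the punishments, one call maximises \<open>f\<^sub>\<lambda>\<close> over
  these roots (answer \<open>y\<^sub>1\<close>), and one call maximises the leaders' total payoff subject to
  \<open>u\<^sub>p \<ge> u\<^sub>p(y\<^sub>1)\<close> for all leaders; its answer is Pareto optimal among stable roots and, as
  \<open>\<lambda> \<ge> 0\<close>, no worse than \<open>y\<^sub>1\<close> for \<open>f\<^sub>\<lambda>\<close>.

  The oracle only has to answer when an optimum exists. Attainment is linear programming
  duality (Farkas' lemma, proved by Fourier-Motzkin elimination); that every query is feasible
  rests on the existence of correlated equilibria, proved by Hart and Schmeidler's argument: a
  dual certificate of infeasibility, averaged against the product of stationary distributions of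
  the players' deviation multipliers, would have to be both zero and negative.\<close>

section \<open>Farkas' lemma by Fourier-Motzkin elimination\<close>

lemma exists_between_finite:
  fixes lo hi :: "'i \<Rightarrow> real"
  assumes "finite P" "finite N" "\<And>p q. p \<in> P \<Longrightarrow> q \<in> N \<Longrightarrow> lo p \<le> hi q"
  shows "\<exists>t. (\<forall>p\<in>P. lo p \<le> t) \<and> (\<forall>q\<in>N. t \<le> hi q)"
proof (cases "P = {}")
  case True
  then show ?thesis
    by (intro exI[of _ "if N = {} then 0 else Min (hi ` N)"]) (use assms in auto)
next
  case False
  then show ?thesis
    by (intro exI[of _ "Max (lo ` P)"]) (use assms in \<open>auto simp: Max_le_iff\<close>)
qed

abbreviation solves_ineqs :: "('i \<Rightarrow> 'v \<Rightarrow> real) \<Rightarrow> ('i \<Rightarrow> real) \<Rightarrow> 'v set \<Rightarrow> 'i set \<Rightarrow> ('v \<Rightarrow> real) \<Rightarrow> bool"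
  where "solves_ineqs A B V I x \<equiv> \<forall>i\<in>I. B i \<le> (\<Sum>v\<in>V. A i v * x v)"

text \<open>Fourier-Motzkin elimination of the variable \<open>w\<close>, with rows indexed by \<open>nat\<close>: a row with
  zero \<open>w\<close>-coefficient moves from \<open>i\<close> to \<open>2 * i\<close>, and each pair \<open>(p, q)\<close> of rows with positive
  and negative \<open>w\<close>-coefficient is combined at the odd index \<open>fm_code (p, q)\<close> so that \<open>w\<close> cancels.\<close>

definition fm_code :: "nat \<times> nat \<Rightarrow> nat" where
  "fm_code pq = 2 * prod_encode pq + 1"

definition fm_row :: "(nat \<Rightarrow> 'v \<Rightarrow> real) \<Rightarrow> 'v \<Rightarrow> (nat \<Rightarrow> real) \<Rightarrow> nat \<Rightarrow> real" where
  "fm_row A w F k = (if even k then F (k div 2)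
     else case prod_decode (k div 2) of (p, q) \<Rightarrow> - A q w * F p + A p w * F q)"

definition fm_index :: "(nat \<Rightarrow> 'v \<Rightarrow> real) \<Rightarrow> 'v \<Rightarrow> nat set \<Rightarrow> nat set" where
  "fm_index A w I = (\<lambda>i. 2 * i) ` {i\<in>I. A i w = 0}
     \<union> fm_code ` ({i\<in>I. 0 < A i w} \<times> {i\<in>I. A i w < 0})"

lemma fm_row_double [simp]: "fm_row A w F (2 * i) = F i"
  by (simp add: fm_row_def)

lemma fm_row_code [simp]: "fm_row A w F (fm_code (p, q)) = - A q w * F p + A p w * F q"
  by (simp add: fm_row_def fm_code_def)

lemma sum_fm_index:
  fixes g :: "nat \<Rightarrow> real"
  assumes "finite I"
  shows "(\<Sum>k\<in>fm_index A w I. g k) = (\<Sum>i\<in>{i\<in>I. A i w = 0}. g (2 * i))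
     + (\<Sum>(p, q)\<in>{i\<in>I. 0 < A i w} \<times> {i\<in>I. A i w < 0}. g (fm_code (p, q)))"
proof -
  have inj_double: "inj_on (\<lambda>i::nat. 2 * i) X" for X by (auto simp: inj_on_def)
  have inj_code: "inj_on fm_code X" for X by (auto simp: inj_on_def fm_code_def prod_encode_eq)
  have "(\<lambda>i. 2 * i) ` X \<inter> fm_code ` Y = {}" for X Y
    by (auto simp: fm_code_def) presburger
  then show ?thesis
    using assms unfolding fm_index_def
    by (simp add: sum.union_disjoint sum.reindex[OF inj_double] sum.reindex[OF inj_code]
        case_prod_beta')
qed

lemma fm_row_eliminates: "k \<in> fm_index A w I \<Longrightarrow> fm_row A w (\<lambda>i. A i w) k = 0"
  by (auto simp: fm_index_def)

lemma fm_solution_extends: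
  fixes A :: "nat \<Rightarrow> 'v \<Rightarrow> real"
  assumes "finite V" "w \<notin> V" "finite I"
    and sol: "solves_ineqs (\<lambda>k v. fm_row A w (\<lambda>i. A i v) k) (fm_row A w B) V (fm_index A w I) x"
  shows "\<exists>t. solves_ineqs A B (insert w V) I (x(w := t))"
proof -
  define r where "r i = (\<Sum>v\<in>V. A i v * x v)" for i
  define P where "P = {i\<in>I. 0 < A i w}"
  define N where "N = {i\<in>I. A i w < 0}"
  have row_Z: "B i \<le> r i" if "i \<in> I" "A i w = 0" for i
    using sol[rule_format, of "2 * i"] that by (auto simp: fm_index_def r_def)
  have row_PN: "(B p - r p) / A p w \<le> (B q - r q) / A q w" if "p \<in> P" "q \<in> N" for p q
  proof -
    have "fm_code (p, q) \<in> fm_index A w I"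
      using that by (auto simp: fm_index_def P_def N_def)
    moreover have "(\<Sum>v\<in>V. (- A q w * A p v + A p w * A q v) * x v) = - A q w * r p + A p w * r q"
      by (simp add: r_def sum_distrib_left sum.distrib[symmetric] algebra_simps)
    ultimately have "- A q w * B p + A p w * B q \<le> - A q w * r p + A p w * r q"
      using sol by fastforce
    then have "(B p - r p) * A q w \<ge> (B q - r q) * A p w" by (simp add: algebra_simps)
    moreover have "A p w > 0" "A q w < 0" using that by (auto simp: P_def N_def)
    ultimately show ?thesis
      by (simp add: pos_divide_le_eq neg_le_divide_eq pos_le_divide_eq mult.commute)
  qed
  have fin_PN: "finite P" "finite N" using assms(3) by (simp_all add: P_def N_def)
  obtain t where t_lo: "\<forall>p\<in>P. (B p - r p) / A p w \<le> t" and t_hi: "\<forall>q\<in>N. t \<le> (B q - r q) / A q w"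
    using exists_between_finite[of P N "\<lambda>p. (B p - r p) / A p w" "\<lambda>q. (B q - r q) / A q w"]
      fin_PN row_PN by auto
  have "B i \<le> A i w * t + r i" if i: "i \<in> I" for i
  proof (cases "A i w" "0 :: real" rule: linorder_cases)
    case less
    then show ?thesis using t_hi i by (auto simp: N_def neg_le_divide_eq algebra_simps)
  next
    case equal
    then show ?thesis using row_Z i by simp
  next
    case greater
    then show ?thesis using t_lo i by (auto simp: P_def pos_divide_le_eq algebra_simps)
  qed
  moreover have "(\<Sum>v\<in>insert w V. A i v * (x(w := t)) v) = A i w * t + r i" for i
    using assms(1,2) unfolding r_def by (simp add: sum.insert) (rule sum.cong, auto)
  ultimately show ?thesis by metis
qed

lemma fm_multipliers_lift:
  assumes fin: "finite I" and nonneg: "\<forall>k\<in>fm_index A w I. 0 \<le> l' k"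
  shows "\<exists>l. (\<forall>i\<in>I. 0 \<le> l i)
    \<and> (\<forall>F. (\<Sum>i\<in>I. l i * F i) = (\<Sum>k\<in>fm_index A w I. l' k * fm_row A w F k))"
proof -
  define Z where "Z = {i\<in>I. A i w = 0}"
  define P where "P = {i\<in>I. 0 < A i w}"
  define N where "N = {i\<in>I. A i w < 0}"
  define lP where "lP p = (\<Sum>q\<in>N. l' (fm_code (p, q)) * - A q w)" for p
  define lN where "lN q = (\<Sum>p\<in>P. l' (fm_code (p, q)) * A p w)" for q
  define l where "l i = (if i \<in> Z then l' (2 * i) else 0) + (if i \<in> P then lP i else 0)
      + (if i \<in> N then lN i else 0)" for i
  have sub: "Z \<subseteq> I" "P \<subseteq> I" "N \<subseteq> I"
    by (auto simp: Z_def P_def N_def)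
  have code_nonneg: "0 \<le> l' (fm_code (p, q))" if "p \<in> P" "q \<in> N" for p q
    using nonneg that by (force simp: fm_index_def P_def N_def)
  have "0 \<le> l i" for i
  proof -
    have "i \<in> Z \<Longrightarrow> 0 \<le> l' (2 * i)" using nonneg by (force simp: fm_index_def Z_def)
    moreover have "i \<in> P \<Longrightarrow> 0 \<le> lP i" unfolding lP_def using code_nonneg
      by (intro sum_nonneg) (auto simp: N_def intro!: mult_nonneg_nonpos)
    moreover have "i \<in> N \<Longrightarrow> 0 \<le> lN i" unfolding lN_def using code_nonneg
      by (intro sum_nonneg) (auto simp: P_def intro!: mult_nonneg_nonneg)
    ultimately show ?thesis by (simp add: l_def)
  qed
  moreover have "(\<Sum>i\<in>I. l i * F i) = (\<Sum>k\<in>fm_index A w I. l' k * fm_row A w F k)" for F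
  proof -
    have "(\<Sum>i\<in>I. l i * F i)
        = (\<Sum>i\<in>Z. l' (2 * i) * F i) + ((\<Sum>p\<in>P. lP p * F p) + (\<Sum>q\<in>N. lN q * F q))"
      using fin sub
      by (simp add: l_def distrib_right sum.distrib if_distrib[of "\<lambda>x. x * F _"]
          sum.If_cases Int_absorb1 add.assoc cong: if_cong)
    also have "(\<Sum>p\<in>P. lP p * F p) + (\<Sum>q\<in>N. lN q * F q)
        = (\<Sum>(p, q)\<in>P \<times> N. l' (fm_code (p, q)) * (- A q w * F p + A p w * F q))"
    proof -
      have "(\<Sum>p\<in>P. lP p * F p) = (\<Sum>(p, q)\<in>P \<times> N. l' (fm_code (p, q)) * - A q w * F p)"
        by (simp add: lP_def sum_distrib_right sum.cartesian_product)
      moreover have "(\<Sum>q\<in>N. lN q * F q) = (\<Sum>(p, q)\<in>P \<times> N. l' (fm_code (p, q)) * A p w * F q)"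
        by (simp add: lN_def sum_distrib_right sum.cartesian_product[symmetric]) (rule sum.swap)
      ultimately show ?thesis
        by (simp add: sum.distrib[symmetric] split_def algebra_simps)
    qed
    finally show ?thesis
      using fin by (simp add: sum_fm_index Z_def P_def N_def case_prod_beta')
  qed
  ultimately show ?thesis by blast
qed

lemma farkas_nat_index:
  fixes A :: "nat \<Rightarrow> 'v \<Rightarrow> real" and B :: "nat \<Rightarrow> real"
  assumes "finite V" "finite I"
    and "\<nexists>x. solves_ineqs A B V I x"
  shows "\<exists>l. (\<forall>i\<in>I. 0 \<le> l i) \<and> (\<forall>v\<in>V. (\<Sum>i\<in>I. l i * A i v) = 0) \<and> 0 < (\<Sum>i\<in>I. l i * B i)"
  using assms
proof (induction V arbitrary: I A B rule: finite_induct)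
  case empty
  then obtain i where i: "i \<in> I" "0 < B i" by force
  have "(\<Sum>j\<in>I. (if j = i then 1 else 0) * B j) = B i"
    using i empty by (simp add: if_distrib[of "\<lambda>x. x * _"] cong: if_cong)
  then show ?case
    using i by (intro exI[of _ "\<lambda>j. if j = i then 1 else 0"]) auto
next
  case (insert w V)
  let ?I' = "fm_index A w I" and ?A' = "\<lambda>k v. fm_row A w (\<lambda>i. A i v) k"
  have fin': "finite ?I'" using insert.prems(1) by (simp add: fm_index_def)
  have "\<nexists>x. solves_ineqs ?A' (fm_row A w B) V ?I' x"
    using fm_solution_extends[OF insert.hyps(1,2) insert.prems(1)] insert.prems(2) by blast
  from insert.IH[OF fin' this] obtain l' where
    l'_nonneg: "\<forall>k\<in>?I'. 0 \<le> l' k" and l'_A: "\<forall>v\<in>V. (\<Sum>k\<in>?I'. l' k * ?A' k v) = 0"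
    and l'_B: "0 < (\<Sum>k\<in>?I'. l' k * fm_row A w B k)"
    by blast
  obtain l where l_nonneg: "\<forall>i\<in>I. 0 \<le> l i"
    and l_eq: "\<And>F. (\<Sum>i\<in>I. l i * F i) = (\<Sum>k\<in>?I'. l' k * fm_row A w F k)"
    using fm_multipliers_lift[OF insert.prems(1) l'_nonneg] by blast
  have "(\<Sum>i\<in>I. l i * A i w) = 0"
    unfolding l_eq by (simp add: fm_row_eliminates)
  then have "\<forall>v\<in>insert w V. (\<Sum>i\<in>I. l i * A i v) = 0"
    using l'_A by (simp add: l_eq)
  then show ?case using l_nonneg l'_B by (auto simp: l_eq)
qed

lemma farkas_lemma:
  fixes A :: "'i \<Rightarrow> 'v \<Rightarrow> real" and B :: "'i \<Rightarrow> real"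
  assumes "finite V" "finite I" and "\<nexists>x. solves_ineqs A B V I x"
  shows "\<exists>l. (\<forall>i\<in>I. 0 \<le> l i) \<and> (\<forall>v\<in>V. (\<Sum>i\<in>I. l i * A i v) = 0) \<and> 0 < (\<Sum>i\<in>I. l i * B i)"
proof -
  obtain f where f: "bij_betw f {..<card I} I"
    using finite_same_card_bij[of "{..<card I}" I] assms(2) by auto
  have "\<nexists>x. solves_ineqs (\<lambda>k. A (f k)) (\<lambda>k. B (f k)) V {..<card I} x"
  proof
    assume "\<exists>x. solves_ineqs (\<lambda>k. A (f k)) (\<lambda>k. B (f k)) V {..<card I} x"
    then obtain x where "solves_ineqs (\<lambda>k. A (f k)) (\<lambda>k. B (f k)) V {..<card I} x" ..
    then have "solves_ineqs A B V (f ` {..<card I}) x" by auto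
    with f have "solves_ineqs A B V I x" by (simp add: bij_betw_def)
    then show False using assms(3) by blast
  qed
  from farkas_nat_index[OF assms(1) _ this] obtain l where
    l: "\<forall>k<card I. 0 \<le> l k" "\<forall>v\<in>V. (\<Sum>k<card I. l k * A (f k) v) = 0"
      "0 < (\<Sum>k<card I. l k * B (f k))"
    by auto
  define g where "g = inv_into {..<card I} f"
  have g: "g i < card I" "f (g i) = i" if "i \<in> I" for i
    using f that inv_into_into[of i f "{..<card I}"] unfolding g_def
    by (auto intro: bij_betw_inv_into_right simp: bij_betw_def)
  have reindex: "(\<Sum>i\<in>I. l (g i) * h i) = (\<Sum>k<card I. l k * h (f k))" for h :: "'i \<Rightarrow> real"
    using f unfolding g_def
    by (simp add: sum.reindex_bij_betw[OF f, symmetric] bij_betw_inv_into_left)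
  show ?thesis
    using l g by (intro exI[of _ "l \<circ> g"]) (simp add: reindex)
qed

section \<open>Linear programs attain bounded optima\<close>

lemma weak_duality:
  fixes A :: "'i \<Rightarrow> 'v \<Rightarrow> real"
  assumes "\<forall>i\<in>I. 0 \<le> l i" "solves_ineqs A B V I x"
  shows "(\<Sum>i\<in>I. l i * B i) \<le> (\<Sum>v\<in>V. (\<Sum>i\<in>I. l i * A i v) * x v)"
proof -
  have "(\<Sum>i\<in>I. l i * B i) \<le> (\<Sum>i\<in>I. l i * (\<Sum>v\<in>V. A i v * x v))"
    using assms by (intro sum_mono mult_left_mono) auto
  also have "\<dots> = (\<Sum>v\<in>V. (\<Sum>i\<in>I. l i * A i v) * x v)"
    by (simp add: sum_distrib_left sum_distrib_right mult.assoc) (rule sum.swap)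
  finally show ?thesis .
qed

lemma lp_value_drops_below:
  fixes A :: "'i \<Rightarrow> 'v \<Rightarrow> real" and c :: "'v \<Rightarrow> real"
  assumes fin: "finite V" "finite I" and x0: "solves_ineqs A B V I x0"
    and unattained: "\<nexists>x. solves_ineqs A B V I x \<and> T \<le> (\<Sum>v\<in>V. c v * x v)"
  shows "\<exists>T'<T. \<forall>y. solves_ineqs A B V I y \<longrightarrow> (\<Sum>v\<in>V. c v * y v) \<le> T'"
proof -
  define A' where "A' k = (case k of None \<Rightarrow> c | Some i \<Rightarrow> A i)" for k
  define B' where "B' k = (case k of None \<Rightarrow> T | Some i \<Rightarrow> B i)" for k
  have split: "(\<Sum>k\<in>insert None (Some ` I). h k) = h None + (\<Sum>i\<in>I. h (Some i))"
    for h :: "'i option \<Rightarrow> real"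
    using fin by (simp add: sum.insert sum.reindex)
  have "\<nexists>x. solves_ineqs A' B' V (insert None (Some ` I)) x"
    using unattained by (auto simp: A'_def B'_def)
  from farkas_lemma[OF fin(1) _ this] fin obtain l where
    l: "\<forall>k\<in>insert None (Some ` I). 0 \<le> l k"
      "\<forall>v\<in>V. (\<Sum>k\<in>insert None (Some ` I). l k * A' k v) = 0"
      "0 < (\<Sum>k\<in>insert None (Some ` I). l k * B' k)"
    by auto
  define \<mu> where "\<mu> = l None"
  define l' where "l' i = l (Some i)" for i
  have l'_nonneg: "\<forall>i\<in>I. 0 \<le> l' i" and "0 \<le> \<mu>"
    using l(1) by (simp_all add: \<mu>_def l'_def)
  have l'_A: "(\<Sum>i\<in>I. l' i * A i v) = - \<mu> * c v" if "v \<in> V" for v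
    using l(2) that by (simp add: split \<mu>_def l'_def A'_def eq_neg_iff_add_eq_0 add.commute)
  have l'_B: "0 < \<mu> * T + (\<Sum>i\<in>I. l' i * B i)"
    using l(3) by (simp add: split \<mu>_def l'_def B'_def)
  have bound: "(\<Sum>i\<in>I. l' i * B i) \<le> - \<mu> * (\<Sum>v\<in>V. c v * y v)"
    if "solves_ineqs A B V I y" for y
  proof -
    have "(\<Sum>i\<in>I. l' i * B i) \<le> (\<Sum>v\<in>V. (\<Sum>i\<in>I. l' i * A i v) * y v)"
      by (rule weak_duality[OF l'_nonneg that])
    also have "\<dots> = - \<mu> * (\<Sum>v\<in>V. c v * y v)"
      by (simp add: l'_A sum_distrib_left mult.assoc)
    finally show ?thesis .
  qed
  have "\<mu> \<noteq> 0"
    using bound[OF x0] l'_B by auto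
  with \<open>0 \<le> \<mu>\<close> have "0 < \<mu>" by simp
  show ?thesis
  proof (intro exI conjI allI impI)
    show "- (\<Sum>i\<in>I. l' i * B i) / \<mu> < T"
      using l'_B \<open>0 < \<mu>\<close> by (simp add: field_simps)
    show "(\<Sum>v\<in>V. c v * y v) \<le> - (\<Sum>i\<in>I. l' i * B i) / \<mu>" if "solves_ineqs A B V I y" for y
      using bound[OF that] \<open>0 < \<mu>\<close> by (simp add: field_simps)
  qed
qed

lemma lp_optimum_exists:
  fixes A :: "'i \<Rightarrow> 'v \<Rightarrow> real" and c :: "'v \<Rightarrow> real"
  assumes fin: "finite V" "finite I" and x0: "solves_ineqs A B V I x0"
    and bounded: "\<And>x. solves_ineqs A B V I x \<Longrightarrow> (\<Sum>v\<in>V. c v * x v) \<le> M"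
  shows "\<exists>x. solves_ineqs A B V I x
    \<and> (\<forall>y. solves_ineqs A B V I y \<longrightarrow> (\<Sum>v\<in>V. c v * y v) \<le> (\<Sum>v\<in>V. c v * x v))"
proof -
  define achieved where "achieved = (\<lambda>x. \<Sum>v\<in>V. c v * x v) ` Collect (solves_ineqs A B V I)"
  have "achieved \<noteq> {}" "bdd_above achieved"
    using x0 bounded by (auto simp: achieved_def bdd_above_def)
  have "\<exists>x. solves_ineqs A B V I x \<and> Sup achieved \<le> (\<Sum>v\<in>V. c v * x v)"
  proof (rule ccontr)
    assume "\<not> ?thesis"
    then obtain T' where "T' < Sup achieved"
      and "\<forall>y. solves_ineqs A B V I y \<longrightarrow> (\<Sum>v\<in>V. c v * y v) \<le> T'"
      using lp_value_drops_below[OF fin x0] by blast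
    then show False
      using cSup_least[OF \<open>achieved \<noteq> {}\<close>, of T'] by (auto simp: achieved_def)
  qed
  then obtain x where x: "solves_ineqs A B V I x" "Sup achieved \<le> (\<Sum>v\<in>V. c v * x v)"
    by blast
  have "(\<Sum>v\<in>V. c v * y v) \<le> Sup achieved" if "solves_ineqs A B V I y" for y
    using cSup_upper[OF _ \<open>bdd_above achieved\<close>] that by (auto simp: achieved_def)
  then show ?thesis
    using x by (meson order_trans)
qed

section \<open>Polytopes inside the probability simplex\<close>

definition simplex_polytope :: "'v set \<Rightarrow> 'k set \<Rightarrow> ('k \<Rightarrow> 'v \<Rightarrow> real) \<Rightarrow> ('k \<Rightarrow> real)
    \<Rightarrow> ('v \<Rightarrow> real) set" where
  "simplex_polytope V K g \<beta> = {x. (\<forall>v\<in>V. 0 \<le> x v) \<and> (\<Sum>v\<in>V. x v) = 1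
     \<and> (\<forall>k\<in>K. \<beta> k \<le> (\<Sum>v\<in>V. g k v * x v))}"

text \<open>The polytope as one system of inequalities: \<open>Inl v\<close> is \<open>x v \<ge> 0\<close>, \<open>Inr (Inl \<sigma>)\<close> is
  one half of \<open>\<Sum>x = 1\<close>, and \<open>Inr (Inr k)\<close> is the \<open>k\<close>-th constraint.\<close>

definition sp_index :: "'v set \<Rightarrow> 'k set \<Rightarrow> ('v + bool + 'k) set" where
  "sp_index V K = Inl ` V \<union> Inr ` (range Inl \<union> Inr ` K)"

definition sp_coeff :: "('k \<Rightarrow> 'v \<Rightarrow> real) \<Rightarrow> 'v + bool + 'k \<Rightarrow> 'v \<Rightarrow> real" where
  "sp_coeff g i v = (case i of Inl w \<Rightarrow> if v = w then 1 else 0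
     | Inr (Inl \<sigma>) \<Rightarrow> if \<sigma> then 1 else -1 | Inr (Inr k) \<Rightarrow> g k v)"

definition sp_bound :: "('k \<Rightarrow> real) \<Rightarrow> 'v + bool + 'k \<Rightarrow> real" where
  "sp_bound \<beta> i = (case i of Inl _ \<Rightarrow> 0 | Inr (Inl \<sigma>) \<Rightarrow> if \<sigma> then 1 else -1 | Inr (Inr k) \<Rightarrow> \<beta> k)"

lemma finite_sp_index: "finite V \<Longrightarrow> finite K \<Longrightarrow> finite (sp_index V K)"
  by (simp add: sp_index_def)

lemma sum_sp_index:
  fixes h :: "'v + bool + 'k \<Rightarrow> real"
  assumes "finite V" "finite K"
  shows "(\<Sum>i\<in>sp_index V K. h i) = (\<Sum>v\<in>V. h (Inl v)) + h (Inr (Inl True)) + h (Inr (Inl False))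
    + (\<Sum>k\<in>K. h (Inr (Inr k)))"
proof -
  have "sp_index V K = insert (Inr (Inl True)) (insert (Inr (Inl False)) (Inl ` V \<union> (Inr \<circ> Inr) ` K))"
    by (auto simp: sp_index_def image_def)
  moreover have "sum h (Inl ` V \<union> (Inr \<circ> Inr) ` K) = sum h (Inl ` V) + sum h ((Inr \<circ> Inr) ` K)"
    using assms by (intro sum.union_disjoint) auto
  ultimately show ?thesis
    using assms by (simp add: sum.reindex inj_on_def image_iff add_ac)
qed

lemma solves_sp_iff:
  assumes "finite V"
  shows "solves_ineqs (sp_coeff g) (sp_bound \<beta>) V (sp_index V K) x \<longleftrightarrow> x \<in> simplex_polytope V K g \<beta>"
proof -
  have "(\<Sum>v\<in>V. (if v = w then 1 else 0) * x v) = x w" if "w \<in> V" for w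
    using assms that by (simp add: if_distrib[of "\<lambda>c. c * _"] cong: if_cong)
  then have "solves_ineqs (sp_coeff g) (sp_bound \<beta>) V (sp_index V K) x \<longleftrightarrow>
      (\<forall>w\<in>V. 0 \<le> x w) \<and> 1 \<le> (\<Sum>v\<in>V. x v) \<and> -1 \<le> - (\<Sum>v\<in>V. x v)
      \<and> (\<forall>k\<in>K. \<beta> k \<le> (\<Sum>v\<in>V. g k v * x v))"
    by (simp add: sp_index_def sp_coeff_def sp_bound_def sum_negf ball_Un all_bool_eq)
  then show ?thesis
    by (auto simp: simplex_polytope_def)
qed

lemma simplex_polytope_empty_alternative:
  fixes g :: "'k \<Rightarrow> 'v \<Rightarrow> real"
  assumes fin: "finite V" "finite K" and empty: "simplex_polytope V K g (\<lambda>_. 0) = {}"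
  shows "\<exists>l. (\<forall>k\<in>K. 0 \<le> l k) \<and> (\<forall>v\<in>V. (\<Sum>k\<in>K. l k * g k v) < 0)"
proof -
  have "\<nexists>x. solves_ineqs (sp_coeff g) (sp_bound (\<lambda>_. 0)) V (sp_index V K) x"
    using empty by (simp add: solves_sp_iff[OF fin(1)])
  from farkas_lemma[OF fin(1) finite_sp_index[OF fin] this] obtain l where
    l: "\<forall>i\<in>sp_index V K. 0 \<le> l i" "\<forall>v\<in>V. (\<Sum>i\<in>sp_index V K. l i * sp_coeff g i v) = 0"
      "0 < (\<Sum>i\<in>sp_index V K. l i * sp_bound (\<lambda>_. 0) i)"
    by blast
  define \<gamma> where "\<gamma> = l (Inr (Inl True)) - l (Inr (Inl False))"
  have "0 < \<gamma>"
    using l(3) fin by (simp add: sum_sp_index sp_bound_def \<gamma>_def)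
  have "(\<Sum>k\<in>K. l (Inr (Inr k)) * g k v) < 0" if v: "v \<in> V" for v
  proof -
    have "(\<Sum>i\<in>sp_index V K. l i * sp_coeff g i v) = 0" using l(2) v by blast
    then have "l (Inl v) + \<gamma> + (\<Sum>k\<in>K. l (Inr (Inr k)) * g k v) = 0"
      using v fin
      by (simp add: sum_sp_index sp_coeff_def \<gamma>_def if_distrib[of "\<lambda>c. _ * c"] sum.delta'
          cong: if_cong)
    moreover have "0 \<le> l (Inl v)" using l(1) v by (simp add: sp_index_def)
    ultimately show ?thesis using \<open>0 < \<gamma>\<close> by linarith
  qed
  moreover have "\<forall>k\<in>K. 0 \<le> l (Inr (Inr k))" using l(1) by (simp add: sp_index_def)
  ultimately show ?thesis by (intro exI[of _ "\<lambda>k. l (Inr (Inr k))"]) auto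
qed

lemma simplex_polytope_max_exists:
  fixes g :: "'k \<Rightarrow> 'v \<Rightarrow> real" and c :: "'v \<Rightarrow> real"
  assumes fin: "finite V" "finite K" and nonempty: "x0 \<in> simplex_polytope V K g \<beta>"
  shows "\<exists>x\<in>simplex_polytope V K g \<beta>. \<forall>y\<in>simplex_polytope V K g \<beta>.
    (\<Sum>v\<in>V. c v * y v) \<le> (\<Sum>v\<in>V. c v * x v)"
proof -
  let ?solves = "solves_ineqs (sp_coeff g) (sp_bound \<beta>) V (sp_index V K)"
  have bounded: "(\<Sum>v\<in>V. c v * x v) \<le> (\<Sum>v\<in>V. \<bar>c v\<bar>)" if "?solves x" for x
  proof (rule sum_mono)
    fix v assume v: "v \<in> V"
    have x: "x \<in> simplex_polytope V K g \<beta>" using that solves_sp_iff[OF fin(1)] by blast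
    then have "x v \<le> (\<Sum>w\<in>V. x w)"
      using v fin by (intro member_le_sum) (auto simp: simplex_polytope_def)
    then have "0 \<le> x v" "x v \<le> 1" using x v by (auto simp: simplex_polytope_def)
    then show "c v * x v \<le> \<bar>c v\<bar>"
      by (metis abs_ge_self abs_mult abs_of_nonneg mult_left_le order_trans abs_ge_zero)
  qed
  have "?solves x0" using nonempty solves_sp_iff[OF fin(1)] by blast
  from lp_optimum_exists[OF fin(1) finite_sp_index[OF fin] this bounded]
  obtain x where "?solves x" "\<forall>y. ?solves y \<longrightarrow> (\<Sum>v\<in>V. c v * y v) \<le> (\<Sum>v\<in>V. c v * x v)"
    by blast
  then show ?thesis using solves_sp_iff[OF fin(1)] by blast
qed

section \<open>Stationary distributions\<close>

definition is_stationary :: "'b set \<Rightarrow> ('b \<Rightarrow> 'b \<Rightarrow> real) \<Rightarrow> ('b \<Rightarrow> real) \<Rightarrow> bool" where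
  "is_stationary S y q \<longleftrightarrow> (\<forall>a\<in>S. 0 \<le> q a) \<and> (\<Sum>a\<in>S. q a) = 1
     \<and> (\<forall>b\<in>S. (\<Sum>a\<in>S. q a * y a b) = q b * (\<Sum>c\<in>S. y b c))"

lemma stationary_distribution_exists:
  fixes y :: "'b \<Rightarrow> 'b \<Rightarrow> real"
  assumes S: "finite S" "S \<noteq> {}" and y: "\<forall>a\<in>S. \<forall>b\<in>S. 0 \<le> y a b"
  shows "\<exists>q. is_stationary S y q"
proof -
  define flow where "flow b a = y a b - (if a = b then \<Sum>c\<in>S. y b c else 0)" for b a
  define g where "g k a = (if snd k then 1 else -1) * flow (fst k) a" for k :: "'b \<times> bool" and a
  have net_inflow: "(\<Sum>a\<in>S. flow b a * q a) = (\<Sum>a\<in>S. q a * y a b) - q b * (\<Sum>c\<in>S. y b c)"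
    if "b \<in> S" for b q
  proof -
    have "(\<Sum>a\<in>S. flow b a * q a)
        = (\<Sum>a\<in>S. q a * y a b - (if a = b then q b * (\<Sum>c\<in>S. y b c) else 0))"
      by (rule sum.cong) (auto simp: flow_def algebra_simps)
    then show ?thesis using S that by (simp add: sum_subtractf)
  qed
  show ?thesis
  proof (cases "simplex_polytope S (S \<times> UNIV) g (\<lambda>_. 0) = {}")
    case False
    then obtain q where q: "q \<in> simplex_polytope S (S \<times> UNIV) g (\<lambda>_. 0)" by blast
    have "(\<Sum>a\<in>S. flow b a * q a) = 0" if "b \<in> S" for b
    proof -
      have "\<forall>k\<in>S \<times> UNIV. 0 \<le> (\<Sum>a\<in>S. g k a * q a)" using q by (simp add: simplex_polytope_def)
      then have "0 \<le> (\<Sum>a\<in>S. g (b, True) a * q a)" "0 \<le> (\<Sum>a\<in>S. g (b, False) a * q a)"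
        using that by auto
      then show ?thesis by (simp add: g_def sum_negf)
    qed
    then show ?thesis
      using q by (auto simp: is_stationary_def simplex_polytope_def net_inflow)
  next
    case True
    then obtain l where l_nonneg: "\<forall>k\<in>S \<times> UNIV. 0 \<le> l k"
      and l_neg: "\<forall>v\<in>S. (\<Sum>k\<in>S \<times> UNIV. l k * g k v) < 0"
      using simplex_polytope_empty_alternative[of S "S \<times> UNIV" g] S by auto
    define z where "z b = l (b, True) - l (b, False)" for b
    have "Min (z ` S) \<in> z ` S" using S by (intro Min_in) auto
    then obtain v where "v \<in> S" "z v = Min (z ` S)" by auto
    then have v: "v \<in> S" "\<forall>c\<in>S. z v \<le> z c" using S by auto
    have "(\<Sum>k\<in>S \<times> UNIV. l k * g k v) = (\<Sum>b\<in>S. z b * flow b v)"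
      by (simp add: sum.cartesian_product' UNIV_bool g_def z_def algebra_simps)
    also have "\<dots> = (\<Sum>c\<in>S. y v c * (z c - z v))"
      using S v(1)
      by (simp add: flow_def right_diff_distrib sum_subtractf if_distrib[of "\<lambda>c. _ * c"]
          sum_distrib_left mult.commute cong: if_cong)
    also have "\<dots> \<ge> 0"
      using y v by (intro sum_nonneg mult_nonneg_nonneg) auto
    finally have False using l_neg v(1) by auto
    then show ?thesis ..
  qed
qed

lemma stationary_flow_balance:
  fixes y :: "'b \<Rightarrow> 'b \<Rightarrow> real"
  assumes "is_stationary S y q"
  shows "(\<Sum>a\<in>S. \<Sum>b\<in>S. y a b * (q a * (W a - W b))) = 0"
proof -
  have stationary: "\<forall>b\<in>S. (\<Sum>a\<in>S. q a * y a b) = q b * (\<Sum>c\<in>S. y b c)"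
    using assms by (simp add: is_stationary_def)
  have "(\<Sum>a\<in>S. \<Sum>b\<in>S. y a b * (q a * W b)) = (\<Sum>b\<in>S. (\<Sum>a\<in>S. q a * y a b) * W b)"
    by (subst sum.swap) (simp add: sum_distrib_right mult.assoc mult.left_commute)
  also have "\<dots> = (\<Sum>b\<in>S. \<Sum>c\<in>S. y b c * (q b * W b))"
    using stationary by (simp add: sum_distrib_left sum_distrib_right mult.assoc mult.left_commute)
  finally show ?thesis
    by (simp add: right_diff_distrib sum_subtractf)
qed

section \<open>Existence of correlated equilibria\<close>

definition incentive :: "(nat \<Rightarrow> (nat \<Rightarrow> 'a) \<Rightarrow> real) \<Rightarrow> nat \<times> 'a \<times> 'a \<Rightarrow> (nat \<Rightarrow> 'a) \<Rightarrow> real" where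
  "incentive u t s = (case t of (p, a, b) \<Rightarrow> if s p = a then u p s - u p (s(p := b)) else 0)"

definition deviations :: "(nat \<Rightarrow> 'a set) \<Rightarrow> nat set \<Rightarrow> (nat \<times> 'a \<times> 'a) set" where
  "deviations Sp P = (SIGMA p:P. Sp p \<times> Sp p)"

lemma finite_profiles: "finite_game n Sp \<Longrightarrow> finite (profiles n Sp)"
  unfolding finite_game_def profiles_def by (intro finite_PiE) auto

lemma finite_deviations: "finite_game n Sp \<Longrightarrow> P \<subseteq> {..<n} \<Longrightarrow> finite (deviations Sp P)"
  unfolding finite_game_def deviations_def by (intro finite_SigmaI) (auto intro: finite_subset)

lemma profiles_update: "s \<in> profiles n Sp \<Longrightarrow> p < n \<Longrightarrow> b \<in> Sp p \<Longrightarrow> s(p := b) \<in> profiles n Sp"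
  unfolding profiles_def by (auto simp: PiE_iff extensional_def)

lemma CE_P_antimono: "P \<subseteq> Q \<Longrightarrow> CE_P n Sp u Q \<subseteq> CE_P n Sp u P"
  unfolding CE_P_def by auto

lemma CE_P_iff_polytope:
  assumes "finite_game n Sp"
  shows "x \<in> CE_P n Sp u P \<longleftrightarrow> (\<forall>s. s \<notin> profiles n Sp \<longrightarrow> x s = 0)
    \<and> x \<in> simplex_polytope (profiles n Sp) (deviations Sp P) (incentive u) (\<lambda>_. 0)"
proof -
  have incentive_sum: "(\<Sum>s\<in>profiles n Sp. incentive u (p, a, b) s * x s)
      = (\<Sum>s\<in>{s\<in>profiles n Sp. s p = a}. x s * (u p s - u p (s(p := b))))" for p a b
    using finite_profiles[OF assms]
    by (simp add: sum.inter_filter incentive_def) (rule sum.cong, auto)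
  have diag: "(\<Sum>s\<in>profiles n Sp. incentive u (p, a, a) s * x s) = 0" for p a
    by (rule sum.neutral) (auto simp: incentive_def fun_upd_idem)
  let ?gain = "\<lambda>t. \<Sum>s\<in>profiles n Sp. incentive u t s * x s"
  have "(\<forall>p\<in>P. \<forall>a\<in>Sp p. \<forall>b\<in>Sp p. a \<noteq> b \<longrightarrow> 0 \<le> ?gain (p, a, b))
      \<longleftrightarrow> (\<forall>t\<in>deviations Sp P. 0 \<le> ?gain t)"
  proof
    assume "\<forall>p\<in>P. \<forall>a\<in>Sp p. \<forall>b\<in>Sp p. a \<noteq> b \<longrightarrow> 0 \<le> ?gain (p, a, b)"
    then have "0 \<le> ?gain (p, a, b)" if "p \<in> P" "a \<in> Sp p" "b \<in> Sp p" for p a b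
      using that diag by (cases "a = b") auto
    then show "\<forall>t\<in>deviations Sp P. 0 \<le> ?gain t" by (auto simp: deviations_def)
  qed (auto simp: deviations_def)
  then show ?thesis
    unfolding CE_P_def is_dist_def simplex_polytope_def incentive_sum by auto
qed

definition product_dist :: "nat set \<Rightarrow> (nat \<Rightarrow> 'a \<Rightarrow> real) \<Rightarrow> (nat \<Rightarrow> 'a) \<Rightarrow> real" where
  "product_dist R Q s = (\<Prod>r\<in>R. Q r (s r))"

definition payoff_against :: "nat \<Rightarrow> (nat \<Rightarrow> 'a set) \<Rightarrow> (nat \<Rightarrow> (nat \<Rightarrow> 'a) \<Rightarrow> real)
    \<Rightarrow> (nat \<Rightarrow> 'a \<Rightarrow> real) \<Rightarrow> nat \<Rightarrow> 'a \<Rightarrow> real" where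
  "payoff_against n Sp u Q p a =
    (\<Sum>s\<in>{s\<in>profiles n Sp. s p = a}. product_dist ({..<n} - {p}) Q s * u p s)"

lemma sum_product_dist:
  assumes "finite_game n Sp" "\<forall>r<n. (\<Sum>a\<in>Sp r. Q r a) = 1"
  shows "(\<Sum>s\<in>profiles n Sp. product_dist {..<n} Q s) = 1"
  using prod_sum_PiE[of "{..<n}" Sp "\<lambda>r a. Q r a"] assms
  by (simp add: finite_game_def profiles_def product_dist_def)

lemma incentive_product_dist:
  assumes fg: "finite_game n Sp" and p: "p < n" "a \<in> Sp p" "b \<in> Sp p"
  shows "(\<Sum>s\<in>profiles n Sp. product_dist {..<n} Q s * incentive u (p, a, b) s)
    = Q p a * (payoff_against n Sp u Q p a - payoff_against n Sp u Q p b)"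
proof -
  let ?V = "\<lambda>c. {s\<in>profiles n Sp. s p = c}" and ?others = "product_dist ({..<n} - {p}) Q"
  have split: "product_dist {..<n} Q s = Q p (s p) * ?others s" for s
    using p by (simp add: product_dist_def prod.remove)
  have "(\<Sum>s\<in>profiles n Sp. product_dist {..<n} Q s * incentive u (p, a, b) s)
      = (\<Sum>s\<in>?V a. Q p a * (?others s * u p s - ?others s * u p (s(p := b))))"
    using finite_profiles[OF fg]
    by (simp add: sum.inter_filter incentive_def split) (rule sum.cong, auto simp: algebra_simps)
  also have "(\<Sum>s\<in>?V a. ?others s * u p (s(p := b))) = payoff_against n Sp u Q p b"
    unfolding payoff_against_def
    by (rule sum.reindex_bij_witness[of _ "\<lambda>s. s(p := a)" "\<lambda>s. s(p := b)"])
      (use p in \<open>auto simp: profiles_update product_dist_def intro!: prod.cong\<close>)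
  ultimately show ?thesis
    by (simp add: payoff_against_def sum_distrib_left[symmetric] sum_subtractf)
qed

lemma product_dist_nonneg:
  "\<forall>p<n. \<forall>a\<in>Sp p. 0 \<le> Q p a \<Longrightarrow> s \<in> profiles n Sp \<Longrightarrow> 0 \<le> product_dist {..<n} Q s"
  by (auto simp: product_dist_def profiles_def intro!: prod_nonneg)

lemma product_dist_balances_deviations:
  assumes fg: "finite_game n Sp" and Q: "\<forall>p<n. is_stationary (Sp p) (\<lambda>a b. l (p, a, b)) (Q p)"
  shows "(\<Sum>s\<in>profiles n Sp. product_dist {..<n} Q s
    * (\<Sum>t\<in>deviations Sp {..<n}. l t * incentive u t s)) = 0"
proof -
  let ?\<pi> = "product_dist {..<n} Q" and ?W = "payoff_against n Sp u Q"
  have Sp: "finite (Sp p)" if "p < n" for p using fg that by (auto simp: finite_game_def)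
  have "(\<Sum>s\<in>profiles n Sp. ?\<pi> s * (\<Sum>t\<in>deviations Sp {..<n}. l t * incentive u t s))
      = (\<Sum>t\<in>deviations Sp {..<n}. l t * (\<Sum>s\<in>profiles n Sp. ?\<pi> s * incentive u t s))"
    by (simp add: sum_distrib_left sum_distrib_right mult.left_commute) (rule sum.swap)
  also have "\<dots> = (\<Sum>p<n. \<Sum>a\<in>Sp p. \<Sum>b\<in>Sp p. l (p, a, b) * (Q p a * (?W p a - ?W p b)))"
  proof -
    have "(\<Sum>t\<in>deviations Sp {..<n}. h t) = (\<Sum>p<n. \<Sum>a\<in>Sp p. \<Sum>b\<in>Sp p. h (p, a, b))"
      for h :: "_ \<Rightarrow> real"
      unfolding deviations_def using Sp by (simp add: sum.Sigma sum.cartesian_product split_def)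
    then show ?thesis
      by (simp, intro sum.cong refl) (simp add: incentive_product_dist[OF fg])
  qed
  also have "\<dots> = 0"
    using Q by (simp add: stationary_flow_balance)
  finally show ?thesis .
qed

lemma correlated_equilibrium_exists:
  assumes fg: "finite_game n Sp"
  shows "\<exists>x. x \<in> CE_P n Sp u {..<n}"
proof -
  let ?V = "profiles n Sp" and ?D = "deviations Sp {..<n}"
  have fin: "finite ?V" "finite ?D"
    using finite_profiles[OF fg] finite_deviations[OF fg] by auto
  show ?thesis
  proof (cases "simplex_polytope ?V ?D (incentive u) (\<lambda>_. 0) = {}")
    case False
    then obtain x where "x \<in> simplex_polytope ?V ?D (incentive u) (\<lambda>_. 0)" by blast
    then have "(\<lambda>s. if s \<in> ?V then x s else 0) \<in> CE_P n Sp u {..<n}"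
      by (simp add: CE_P_iff_polytope[OF fg] simplex_polytope_def cong: sum.cong)
    then show ?thesis by blast
  next
    case True
    then obtain l where l_nonneg: "\<forall>t\<in>?D. 0 \<le> l t"
      and l_neg: "\<forall>s\<in>?V. (\<Sum>t\<in>?D. l t * incentive u t s) < 0"
      using simplex_polytope_empty_alternative[OF fin] by blast
    have "\<forall>p\<in>{..<n}. \<exists>q. is_stationary (Sp p) (\<lambda>a b. l (p, a, b)) q"
      using fg l_nonneg
      by (auto simp: finite_game_def deviations_def intro!: stationary_distribution_exists)
    then obtain Q where Q: "\<forall>p<n. is_stationary (Sp p) (\<lambda>a b. l (p, a, b)) (Q p)"
      by (metis bchoice lessThan_iff)
    let ?\<pi> = "product_dist {..<n} Q"
    have \<pi>_nonneg: "\<forall>s\<in>?V. 0 \<le> ?\<pi> s"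
      using Q product_dist_nonneg[of n Sp Q] by (simp add: is_stationary_def)
    have "\<exists>s\<in>?V. 0 < ?\<pi> s"
    proof (rule ccontr)
      assume "\<not> ?thesis"
      then have "(\<Sum>s\<in>?V. ?\<pi> s) = 0" using \<pi>_nonneg by (intro sum.neutral) (meson antisym not_less)
      then show False using sum_product_dist[OF fg] Q by (simp add: is_stationary_def)
    qed
    then have "(\<Sum>s\<in>?V. ?\<pi> s * (\<Sum>t\<in>?D. l t * incentive u t s)) < (\<Sum>s\<in>?V. 0)"
      using fin l_neg \<pi>_nonneg
      by (intro sum_strict_mono_ex1) (auto intro: mult_pos_neg mult_nonneg_nonpos less_imp_le)
    then show ?thesis using product_dist_balances_deviations[OF fg Q] by simp
  qed
qed

section \<open>Answers of the stability oracle\<close>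

definition oracle_forms :: "(nat \<Rightarrow> (nat \<Rightarrow> 'a) \<Rightarrow> real) \<Rightarrow> (nat \<times> 'a \<times> 'a) + nat \<Rightarrow> (nat \<Rightarrow> 'a) \<Rightarrow> real"
  where "oracle_forms u k s = (case k of Inl t \<Rightarrow> incentive u t s | Inr p \<Rightarrow> u p s)"

definition oracle_bounds :: "nat \<Rightarrow> (nat \<Rightarrow> 'a set) \<Rightarrow> (nat \<Rightarrow> (nat \<Rightarrow> 'a) \<Rightarrow> real)
    \<Rightarrow> (nat \<Rightarrow> 'a dist option) \<Rightarrow> (nat \<times> 'a \<times> 'a) + nat \<Rightarrow> real" where
  "oracle_bounds n Sp u xs k = (case k of Inl _ \<Rightarrow> 0 | Inr p \<Rightarrow> EU n Sp u p (the (xs p)))"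

lemma oracle_feasible_iff_polytope:
  assumes "finite_game n Sp"
  shows "x \<in> oracle_feasible n Sp u Ls xs \<longleftrightarrow> (\<forall>s. s \<notin> profiles n Sp \<longrightarrow> x s = 0)
    \<and> x \<in> simplex_polytope (profiles n Sp) (deviations Sp ({..<n} - Ls) <+> dom xs)
         (oracle_forms u) (oracle_bounds n Sp u xs)"
proof -
  have "x \<in> simplex_polytope (profiles n Sp) (deviations Sp ({..<n} - Ls) <+> dom xs)
        (oracle_forms u) (oracle_bounds n Sp u xs)
    \<longleftrightarrow> x \<in> simplex_polytope (profiles n Sp) (deviations Sp ({..<n} - Ls)) (incentive u) (\<lambda>_. 0)
      \<and> (\<forall>p xp. xs p = Some xp \<longrightarrow> EU n Sp u p xp \<le> EU n Sp u p x)"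
    by (simp add: simplex_polytope_def Plus_def ball_Un Ball_image_comp oracle_forms_def
        oracle_bounds_def EU_def)
      (force simp: mult.commute)
  then show ?thesis
    by (auto simp: oracle_feasible_def CE_P_iff_polytope[OF assms])
qed

lemma oracle_obj_linear: "oracle_obj n Sp u c x = (\<Sum>s\<in>profiles n Sp. (\<Sum>p<n. c p * u p s) * x s)"
  unfolding oracle_obj_def by (subst sum.swap) (simp add: sum_distrib_right)

lemma oracle_optimum_exists:
  assumes fg: "finite_game n Sp" and fin: "finite (dom xs)"
    and z0: "z0 \<in> oracle_feasible n Sp u Ls xs"
  shows "\<exists>z\<in>oracle_feasible n Sp u Ls xs. \<forall>z'\<in>oracle_feasible n Sp u Ls xs.
    oracle_obj n Sp u c z' \<le> oracle_obj n Sp u c z"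
proof -
  let ?V = "profiles n Sp" and ?K = "deviations Sp ({..<n} - Ls) <+> dom xs"
  let ?P = "simplex_polytope ?V ?K (oracle_forms u) (oracle_bounds n Sp u xs)"
  have "finite ?K" using finite_deviations[OF fg, of "{..<n} - Ls"] fin by auto
  moreover have "z0 \<in> ?P" using z0 oracle_feasible_iff_polytope[OF fg] by blast
  ultimately obtain x where x: "x \<in> ?P"
    and opt: "\<forall>y\<in>?P. (\<Sum>s\<in>?V. (\<Sum>p<n. c p * u p s) * y s) \<le> (\<Sum>s\<in>?V. (\<Sum>p<n. c p * u p s) * x s)"
    using simplex_polytope_max_exists[OF finite_profiles[OF fg], of ?K z0 _ _ "\<lambda>s. \<Sum>p<n. c p * u p s"]
    by blast
  let ?z = "\<lambda>s. if s \<in> ?V then x s else 0"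
  have "?z \<in> oracle_feasible n Sp u Ls xs"
    using x by (simp add: oracle_feasible_iff_polytope[OF fg] simplex_polytope_def cong: sum.cong)
  moreover have "oracle_obj n Sp u c z' \<le> oracle_obj n Sp u c ?z"
    if "z' \<in> oracle_feasible n Sp u Ls xs" for z'
    using opt that oracle_feasible_iff_polytope[OF fg]
    by (simp add: oracle_obj_linear cong: sum.cong)
  ultimately show ?thesis by blast
qed

lemma stability_oracle_answer:
  assumes orc: "stability_oracle n Sp u Orc" and fg: "finite_game n Sp"
    and query: "\<forall>p<n. \<bar>c p\<bar> \<le> 1" "Ls \<subseteq> {..<n}" "dom xs \<subseteq> Ls"
      "\<forall>p xp. xs p = Some xp \<longrightarrow> is_dist n Sp xp"
    and z0: "z0 \<in> oracle_feasible n Sp u Ls xs"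
  shows "Orc (c, Ls, xs) \<in> oracle_feasible n Sp u Ls xs \<and> (\<forall>z\<in>oracle_feasible n Sp u Ls xs.
    oracle_obj n Sp u c z \<le> oracle_obj n Sp u c (Orc (c, Ls, xs)))"
proof -
  have "finite (dom xs)" using query(2,3) by (meson finite_lessThan finite_subset)
  note optimum = oracle_optimum_exists[OF fg this z0, of c]
  show ?thesis
    by (rule orc[unfolded stability_oracle_def, rule_format, of c Ls xs]) (use query optimum in auto)
qed

lemma oracle_obj_weighted:
  assumes "L \<subseteq> {..<n}"
  shows "oracle_obj n Sp u (\<lambda>q. if q \<in> L then w q else 0) x = (\<Sum>q\<in>L. w q * EU n Sp u q x)"
proof -
  have "oracle_obj n Sp u (\<lambda>q. if q \<in> L then w q else 0) x
      = (\<Sum>q<n. if q \<in> L then w q * EU n Sp u q x else 0)"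
    unfolding oracle_obj_def EU_def by (rule sum.cong) (auto simp: sum_distrib_left algebra_simps)
  also have "\<dots> = (\<Sum>q\<in>L. w q * EU n Sp u q x)"
    using assms by (simp add: sum.inter_restrict[symmetric] Int_absorb1)
  finally show ?thesis .
qed

section \<open>Stable profiles and their roots\<close>

definition is_punishment :: "nat \<Rightarrow> (nat \<Rightarrow> 'a set) \<Rightarrow> (nat \<Rightarrow> (nat \<Rightarrow> 'a) \<Rightarrow> real) \<Rightarrow> nat set
    \<Rightarrow> nat \<Rightarrow> 'a dist \<Rightarrow> bool" where
  "is_punishment n Sp u L p z \<longleftrightarrow> z \<in> CE_P n Sp u ({..<n} - (L - {p}))
     \<and> (\<forall>z'\<in>CE_P n Sp u ({..<n} - (L - {p})). EU n Sp u p z \<le> EU n Sp u p z')"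

definition floors :: "nat set \<Rightarrow> (nat \<Rightarrow> 'a dist) \<Rightarrow> nat \<Rightarrow> 'a dist option" where
  "floors L z = (\<lambda>q. if q \<in> L then Some (z q) else None)"

definition maximizes_welfare :: "nat \<Rightarrow> (nat \<Rightarrow> 'a set) \<Rightarrow> (nat \<Rightarrow> (nat \<Rightarrow> 'a) \<Rightarrow> real) \<Rightarrow> nat set
    \<Rightarrow> (nat \<Rightarrow> real) \<Rightarrow> (nat \<Rightarrow> 'a dist) \<Rightarrow> 'a dist \<Rightarrow> bool" where
  "maximizes_welfare n Sp u L w z y \<longleftrightarrow> y \<in> oracle_feasible n Sp u L (floors L z)
     \<and> (\<forall>y'\<in>oracle_feasible n Sp u L (floors L z).
           (\<Sum>q\<in>L. w q * EU n Sp u q y') \<le> (\<Sum>q\<in>L. w q * EU n Sp u q y))"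

lemma oracle_feasible_floors:
  "y \<in> oracle_feasible n Sp u L (floors L z) \<longleftrightarrow>
    y \<in> CE_P n Sp u ({..<n} - L) \<and> (\<forall>p\<in>L. EU n Sp u p (z p) \<le> EU n Sp u p y)"
  by (auto simp: oracle_feasible_def floors_def split: if_splits)

lemma stable_root_feasible:
  assumes L: "L \<subseteq> {..<n}" and z: "\<forall>p\<in>L. is_punishment n Sp u L p (z p)"
    and x: "x \<in> XS n Sp u L"
  shows "x [] \<in> oracle_feasible n Sp u L (floors L z)"
  unfolding oracle_feasible_floors
proof
  have "[] \<in> ordered_subsets L" by (simp add: ordered_subsets_def)
  then show "x [] \<in> CE_P n Sp u ({..<n} - L)" using x by (auto simp: XS_def bigX_def)
  show "\<forall>p\<in>L. EU n Sp u p (z p) \<le> EU n Sp u p (x [])"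
  proof
    fix p assume p: "p \<in> L"
    have "[p] \<in> ordered_subsets L" using p by (simp add: ordered_subsets_def)
    moreover have "set [p] \<union> ({..<n} - L) = {..<n} - (L - {p})" using p L by auto
    ultimately have "x [p] \<in> CE_P n Sp u ({..<n} - (L - {p}))" using x by (auto simp: XS_def bigX_def)
    then have "EU n Sp u p (z p) \<le> EU n Sp u p (x [p])" using z p by (simp add: is_punishment_def)
    also have "\<dots> \<le> EU n Sp u p (x [])" using x p by (auto simp: XS_def stable_at_def)
    finally show "EU n Sp u p (z p) \<le> EU n Sp u p (x [])" .
  qed
qed

lemma correlated_equilibrium_above_punishments:
  assumes e: "e \<in> CE_P n Sp u {..<n}" and z: "\<forall>p\<in>L. is_punishment n Sp u L p (z p)"
  shows "e \<in> oracle_feasible n Sp u L (floors L z)"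
proof -
  have "e \<in> CE_P n Sp u ({..<n} - L) \<and> (\<forall>p\<in>L. e \<in> CE_P n Sp u ({..<n} - (L - {p})))"
    using CE_P_antimono e by blast
  then show ?thesis using z by (simp add: oracle_feasible_floors is_punishment_def)
qed

lemma stable_extension:
  assumes fg: "finite_game n Sp" and L: "L \<subseteq> {..<n}" and z: "\<forall>p\<in>L. is_punishment n Sp u L p (z p)"
    and y: "y \<in> oracle_feasible n Sp u L (floors L z)"
  shows "\<exists>x\<in>XS n Sp u L. x [] = y \<and> (\<forall>p\<in>L. x [p] = z p)"
proof -
  obtain e where e: "e \<in> CE_P n Sp u {..<n}" using correlated_equilibrium_exists[OF fg] by blast
  define x where "x \<pi> = (if \<pi> = [] then y else if \<exists>p\<in>L. \<pi> = [p] then z (hd \<pi>) else e)" for \<pi>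
  have "x \<in> bigX n Sp u L"
    unfolding bigX_def
  proof (intro CollectI ballI)
    fix \<pi> assume \<pi>: "\<pi> \<in> ordered_subsets L"
    have "set \<pi> \<union> ({..<n} - L) \<subseteq> {..<n}" using \<pi> L by (auto simp: ordered_subsets_def)
    then have "e \<in> CE_P n Sp u (set \<pi> \<union> ({..<n} - L))" using CE_P_antimono e by blast
    moreover have "set [p] \<union> ({..<n} - L) = {..<n} - (L - {p})" if "p \<in> L" for p using that L by auto
    ultimately show "x \<pi> \<in> CE_P n Sp u (set \<pi> \<union> ({..<n} - L))"
      using y z by (auto simp: x_def oracle_feasible_floors is_punishment_def)
  qed
  moreover have "EU n Sp u p (z p) \<le> EU n Sp u p y" if "p \<in> L" for p
    using y that by (simp add: oracle_feasible_floors)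
  ultimately have "x \<in> XS n Sp u L" by (auto simp: XS_def stable_at_def x_def)
  then show ?thesis by (intro bexI[of _ x]) (auto simp: x_def)
qed

lemma welfare_optimum_pareto:
  assumes L: "L \<subseteq> {..<n}" and z: "\<forall>p\<in>L. is_punishment n Sp u L p (z p)"
    and y: "maximizes_welfare n Sp u L (\<lambda>_. 1) (\<lambda>_. y0) y"
    and x: "x \<in> XS n Sp u L" "x [] = y"
  shows "x [] \<in> pareto_proj n Sp u L [] (XS n Sp u L)"
  unfolding pareto_proj_def pareto_set_def
proof (intro CollectI conjI notI)
  show "x [] \<in> (\<lambda>x'. x' []) ` XS n Sp u L" using x by blast
  assume "\<exists>y'\<in>(\<lambda>x'. x' []) ` XS n Sp u L. (\<forall>p\<in>L - set []. EU n Sp u p (x []) \<le> EU n Sp u p y')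
    \<and> (\<exists>p\<in>L - set []. EU n Sp u p (x []) < EU n Sp u p y')"
  then obtain x' where x': "x' \<in> XS n Sp u L" and ge: "\<forall>p\<in>L. EU n Sp u p y \<le> EU n Sp u p (x' [])"
    and gt: "\<exists>p\<in>L. EU n Sp u p y < EU n Sp u p (x' [])"
    using x(2) by auto
  have "\<forall>p\<in>L. EU n Sp u p y0 \<le> EU n Sp u p y"
    using y by (simp add: maximizes_welfare_def oracle_feasible_floors)
  then have "x' [] \<in> oracle_feasible n Sp u L (floors L (\<lambda>_. y0))"
    using stable_root_feasible[OF L z x'] ge by (auto simp: oracle_feasible_floors intro: order_trans)
  then have "(\<Sum>q\<in>L. EU n Sp u q (x' [])) \<le> (\<Sum>q\<in>L. EU n Sp u q y)"
    using y by (simp add: maximizes_welfare_def)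
  moreover have "(\<Sum>q\<in>L. EU n Sp u q y) < (\<Sum>q\<in>L. EU n Sp u q (x' []))"
    using L ge gt by (intro sum_strict_mono_ex1) (auto intro: finite_subset)
  ultimately show False by simp
qed

lemma sce_of_welfare_optima:
  assumes fg: "finite_game n Sp" and L: "L \<subseteq> {..<n}" and lam: "\<forall>p\<in>L. 0 \<le> lam p"
    and z: "\<forall>p\<in>L. is_punishment n Sp u L p (z p)"
    and y1: "maximizes_welfare n Sp u L lam z y1"
    and y2: "maximizes_welfare n Sp u L (\<lambda>_. 1) (\<lambda>_. y1) y2"
  shows "\<exists>x\<in>XSCE n Sp u L. x [] = y2 \<and> (\<forall>p\<in>L. x [p] = z p)
    \<and> (\<forall>y\<in>XSCE n Sp u L. f_lambda n Sp u L lam y \<le> f_lambda n Sp u L lam x)"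
proof -
  have y2_ge_y1: "\<forall>p\<in>L. EU n Sp u p y1 \<le> EU n Sp u p y2"
    and y1_ge_z: "\<forall>p\<in>L. EU n Sp u p (z p) \<le> EU n Sp u p y1"
    using y1 y2 by (simp_all add: maximizes_welfare_def oracle_feasible_floors)
  then have "y2 \<in> oracle_feasible n Sp u L (floors L z)"
    using y2 by (auto simp: maximizes_welfare_def oracle_feasible_floors intro: order_trans)
  then obtain x where x: "x \<in> XS n Sp u L" "x [] = y2" "\<forall>p\<in>L. x [p] = z p"
    using stable_extension[OF fg L z] by blast
  have f_lambda: "f_lambda n Sp u L lam x' = (\<Sum>p\<in>L. lam p * EU n Sp u p (x' []))" for x'
    unfolding f_lambda_def EU_def by (rule sum.cong) (auto simp: sum_distrib_left algebra_simps)
  have "f_lambda n Sp u L lam y \<le> f_lambda n Sp u L lam x" if "y \<in> XSCE n Sp u L" for y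
  proof -
    have "y [] \<in> oracle_feasible n Sp u L (floors L z)"
      using that stable_root_feasible[OF L z] by (simp add: XSCE_def)
    then have "(\<Sum>p\<in>L. lam p * EU n Sp u p (y [])) \<le> (\<Sum>p\<in>L. lam p * EU n Sp u p y1)"
      using y1 by (simp add: maximizes_welfare_def)
    also have "\<dots> \<le> (\<Sum>p\<in>L. lam p * EU n Sp u p y2)"
      using lam y2_ge_y1 by (intro sum_mono mult_left_mono) auto
    finally show ?thesis by (simp add: f_lambda x(2))
  qed
  then show ?thesis
    using x welfare_optimum_pareto[OF L z y2 x(1,2)] by (auto simp: XSCE_def)
qed

section \<open>The algorithm\<close>

definition punish_query :: "nat set \<Rightarrow> nat \<Rightarrow> 'a query" where
  "punish_query L p = ((\<lambda>q. if q = p then -1 else 0), L - {p}, Map.empty)"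

definition welfare_query :: "nat set \<Rightarrow> (nat \<Rightarrow> real) \<Rightarrow> (nat \<Rightarrow> 'a dist) \<Rightarrow> 'a query" where
  "welfare_query L w z = ((\<lambda>q. if q \<in> L then w q else 0), L, floors L z)"

lemma welfare_query_cong: "\<forall>q\<in>L. z q = z' q \<Longrightarrow> welfare_query L w z = welfare_query L w z'"
  by (auto simp: welfare_query_def floors_def)

lemma punish_query_answer:
  assumes orc: "stability_oracle n Sp u Orc" and fg: "finite_game n Sp"
    and L: "L \<subseteq> {..<n}" and p: "p \<in> L"
  shows "is_punishment n Sp u L p (Orc (punish_query L p))"
proof -
  let ?c = "\<lambda>q. if q = p then -1 else (0::real)"
  have feasible: "oracle_feasible n Sp u (L - {p}) Map.empty = CE_P n Sp u ({..<n} - (L - {p}))"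
    by (auto simp: oracle_feasible_def)
  have obj: "oracle_obj n Sp u ?c x = - EU n Sp u p x" for x
    using oracle_obj_weighted[of "{p}" n Sp u "\<lambda>_. -1" x] p L by auto
  obtain e where "e \<in> CE_P n Sp u {..<n}" using correlated_equilibrium_exists[OF fg] by blast
  then have "e \<in> oracle_feasible n Sp u (L - {p}) Map.empty"
    unfolding feasible using CE_P_antimono[of "{..<n} - (L - {p})" "{..<n}"] by blast
  moreover have "\<forall>q<n. \<bar>?c q\<bar> \<le> 1" "L - {p} \<subseteq> {..<n}" "dom Map.empty \<subseteq> L - {p}"
    using L by auto
  ultimately show ?thesis
    using stability_oracle_answer[OF orc fg, of ?c "L - {p}" Map.empty]
    by (simp add: is_punishment_def punish_query_def feasible obj)
qed

lemma welfare_query_answer: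
  assumes orc: "stability_oracle n Sp u Orc" and fg: "finite_game n Sp" and L: "L \<subseteq> {..<n}"
    and w: "\<forall>q\<in>L. \<bar>w q\<bar> \<le> 1" and z: "\<forall>q\<in>L. is_dist n Sp (z q)"
    and y0: "y0 \<in> oracle_feasible n Sp u L (floors L z)"
  shows "maximizes_welfare n Sp u L w z (Orc (welfare_query L w z))"
proof -
  have "\<forall>q<n. \<bar>if q \<in> L then w q else 0\<bar> \<le> 1" "dom (floors L z) \<subseteq> L"
    "\<forall>q x. floors L z q = Some x \<longrightarrow> is_dist n Sp x"
    using w z by (auto simp: floors_def split: if_splits)
  from stability_oracle_answer[OF orc fg this(1) L this(2,3) y0]
  show ?thesis by (simp add: maximizes_welfare_def welfare_query_def oracle_obj_weighted[OF L])
qed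

lemma run_transcript:
  assumes "\<forall>tr'. length tr' < length tr + m \<longrightarrow> nxt tr' \<noteq> None"
  shows "length (run nxt Orc m tr) = length tr + m \<and> take (length tr) (run nxt Orc m tr) = tr
    \<and> (\<forall>i. length tr \<le> i \<and> i < length tr + m \<longrightarrow>
         run nxt Orc m tr ! i = (the (nxt (take i (run nxt Orc m tr))),
                                 Orc (the (nxt (take i (run nxt Orc m tr))))))"
  using assms
proof (induction m arbitrary: tr)
  case 0
  then show ?case by auto
next
  case (Suc m)
  from Suc.prems have "nxt tr \<noteq> None" by (simp del: not_None_eq)
  then obtain q where q: "nxt tr = Some q" by (meson not_None_eq)
  define R where "R = run nxt Orc m (tr @ [(q, Orc q)])"
  have run: "run nxt Orc (Suc m) tr = R" by (simp add: R_def q)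
  have IH: "length R = length tr + Suc m" "take (Suc (length tr)) R = tr @ [(q, Orc q)]"
    "\<And>i. Suc (length tr) \<le> i \<Longrightarrow> i < length tr + Suc m \<Longrightarrow>
       R ! i = (the (nxt (take i R)), Orc (the (nxt (take i R))))"
    using Suc.IH[of "tr @ [(q, Orc q)]"] Suc.prems unfolding R_def by auto
  have prefix: "take (length tr) R = tr"
    using arg_cong[OF IH(2), of "take (length tr)"] by (simp add: min_def)
  have "R ! length tr = (q, Orc q)"
    using arg_cong[OF IH(2), of "\<lambda>xs. xs ! length tr"] by (simp add: nth_append)
  then have nth: "R ! i = (the (nxt (take i R)), Orc (the (nxt (take i R))))"
    if "length tr \<le> i" "i < length tr + Suc m" for i
    using IH(3) that prefix q by (cases "i = length tr") auto
  show ?case unfolding run using IH(1) prefix nth by simp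
qed

corollary run_from_empty:
  assumes "\<forall>tr. length tr < m \<longrightarrow> nxt tr \<noteq> None"
  shows "length (run nxt Orc m []) = m"
    and "i < m \<Longrightarrow> run nxt Orc m [] ! i = (the (nxt (take i (run nxt Orc m []))),
                                          Orc (the (nxt (take i (run nxt Orc m [])))))"
  using run_transcript[of "[]" m nxt Orc] assms by auto

definition leader_rank :: "nat set \<Rightarrow> nat \<Rightarrow> nat" where
  "leader_rank L p = (LEAST i. sorted_list_of_set L ! i = p)"

lemma leader_rank:
  assumes "finite L" "p \<in> L"
  shows "leader_rank L p < card L" "sorted_list_of_set L ! leader_rank L p = p"
proof -
  obtain i where i: "i < card L" "sorted_list_of_set L ! i = p"
    using assms by (metis in_set_conv_nth length_sorted_list_of_set set_sorted_list_of_set)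
  show "sorted_list_of_set L ! leader_rank L p = p"
    unfolding leader_rank_def by (rule LeastI[of _ i]) (use i in simp)
  have "leader_rank L p \<le> i" unfolding leader_rank_def by (rule Least_le) (use i in simp)
  then show "leader_rank L p < card L" using i by simp
qed

definition sce_next :: "nat set \<Rightarrow> (nat \<Rightarrow> real) \<Rightarrow> 'a transcript \<Rightarrow> 'a query option" where
  "sce_next L lam tr =
    (if length tr < card L then Some (punish_query L (sorted_list_of_set L ! length tr))
     else if length tr = card L then Some (welfare_query L lam (\<lambda>q. snd (tr ! leader_rank L q)))
     else if length tr = card L + 1 then Some (welfare_query L (\<lambda>_. 1) (\<lambda>_. snd (tr ! card L)))
     else None)"

definition sce_output :: "nat set \<Rightarrow> 'a transcript \<Rightarrow> 'a dist \<times> (nat \<Rightarrow> 'a dist)" where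
  "sce_output L tr = (snd (tr ! (card L + 1)), (\<lambda>p. snd (tr ! leader_rank L p)))"

lemma sce_transcript:
  fixes lam :: "nat \<Rightarrow> real" and Orc :: "'a query \<Rightarrow> 'a dist"
  assumes fin: "finite L"
  defines "R \<equiv> run (sce_next L lam) Orc (card L + 2) []"
  defines "z \<equiv> \<lambda>p. Orc (punish_query L p)"
  defines "y1 \<equiv> Orc (welfare_query L lam z)"
  shows "sce_next L lam R = None"
    and "\<forall>p\<in>L. snd (R ! leader_rank L p) = z p"
    and "snd (R ! card L) = y1"
    and "snd (R ! (card L + 1)) = Orc (welfare_query L (\<lambda>_. 1) (\<lambda>_. y1))"
proof -
  have "\<forall>tr. length tr < card L + 2 \<longrightarrow> sce_next L lam tr \<noteq> None"
    by (simp add: sce_next_def del: not_None_eq)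
  note run = run_from_empty[OF this, where Orc = Orc, folded R_def]
  have query: "snd (R ! i) = Orc (the (sce_next L lam (take i R)))" if "i < card L + 2" for i
    using run(2)[OF that] by simp
  show "sce_next L lam R = None" using run(1) by (simp add: sce_next_def)
  show leaders: "\<forall>p\<in>L. snd (R ! leader_rank L p) = z p"
  proof
    fix p assume "p \<in> L"
    with query[of "leader_rank L p"] leader_rank[OF fin this] run(1)
    show "snd (R ! leader_rank L p) = z p" by (simp add: sce_next_def z_def)
  qed
  have "welfare_query L lam (\<lambda>q. snd (take (card L) R ! leader_rank L q)) = welfare_query L lam z"
    using leaders leader_rank[OF fin] by (intro welfare_query_cong) simp
  then show "snd (R ! card L) = y1"
    using query[of "card L"] run(1) by (simp add: sce_next_def y1_def)
  then show "snd (R ! (card L + 1)) = Orc (welfare_query L (\<lambda>_. 1) (\<lambda>_. y1))"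
    using query[of "card L + 1"] run(1) by (simp add: sce_next_def)
qed

lemma sce_algorithm_correct:
  fixes Orc :: "'a query \<Rightarrow> 'a dist"
  assumes fg: "finite_game n Sp" and L: "L \<subseteq> {..<n}" and lam: "\<forall>p\<in>L. 0 \<le> lam p \<and> lam p \<le> 1"
    and orc: "stability_oracle n Sp u Orc"
  shows "let tr = run (sce_next L lam) Orc (card L + 2) [] in
    sce_next L lam tr = None \<and>
    (\<exists>x\<in>XSCE n Sp u L. x [] = fst (sce_output L tr) \<and> (\<forall>p\<in>L. x [p] = snd (sce_output L tr) p)
      \<and> (\<forall>y\<in>XSCE n Sp u L. f_lambda n Sp u L lam y \<le> f_lambda n Sp u L lam x))"
proof -
  have fin: "finite L" using L finite_subset by blast
  define z where "z = (\<lambda>p. Orc (punish_query L p))"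
  define y1 where "y1 = Orc (welfare_query L lam z)"
  define y2 where "y2 = Orc (welfare_query L (\<lambda>_. 1) (\<lambda>_. y1))"
  have z: "\<forall>p\<in>L. is_punishment n Sp u L p (z p)"
    using punish_query_answer[OF orc fg L] by (simp add: z_def)
  obtain e where "e \<in> CE_P n Sp u {..<n}" using correlated_equilibrium_exists[OF fg] by blast
  then have "e \<in> oracle_feasible n Sp u L (floors L z)"
    using correlated_equilibrium_above_punishments z by blast
  moreover have "\<forall>q\<in>L. \<bar>lam q\<bar> \<le> 1" "\<forall>q\<in>L. is_dist n Sp (z q)"
    using lam z by (auto simp: is_punishment_def CE_P_def)
  ultimately have y1: "maximizes_welfare n Sp u L lam z y1"
    unfolding y1_def by (intro welfare_query_answer[OF orc fg L])
  then have "y1 \<in> oracle_feasible n Sp u L (floors L (\<lambda>_. y1))" "is_dist n Sp y1"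
    by (simp_all add: maximizes_welfare_def oracle_feasible_floors CE_P_def)
  then have y2: "maximizes_welfare n Sp u L (\<lambda>_. 1) (\<lambda>_. y1) y2"
    unfolding y2_def by (intro welfare_query_answer[OF orc fg L]) auto
  have "\<forall>p\<in>L. 0 \<le> lam p" using lam by blast
  from sce_of_welfare_optima[OF fg L this z y1 y2] obtain x where x: "x \<in> XSCE n Sp u L" "x [] = y2"
    "\<forall>p\<in>L. x [p] = z p" "\<forall>y\<in>XSCE n Sp u L. f_lambda n Sp u L lam y \<le> f_lambda n Sp u L lam x"
    by blast
  let ?tr = "run (sce_next L lam) Orc (card L + 2) []"
  have "sce_next L lam ?tr = None" "\<forall>p\<in>L. snd (?tr ! leader_rank L p) = z p"
    "snd (?tr ! (card L + 1)) = y2"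
    using sce_transcript[OF fin, of lam Orc] by (simp_all add: z_def y1_def y2_def del: run.simps)
  then show ?thesis
    unfolding Let_def sce_output_def fst_conv snd_conv using x by (auto simp del: run.simps)
qed

theorem theorem3:
  "\<exists>(nxt :: nat \<Rightarrow> (nat \<Rightarrow> 'a set) \<Rightarrow> nat set \<Rightarrow> (nat \<Rightarrow> real) \<Rightarrow> 'a transcript \<Rightarrow> 'a query option)
     (out :: nat \<Rightarrow> (nat \<Rightarrow> 'a set) \<Rightarrow> nat set \<Rightarrow> (nat \<Rightarrow> real) \<Rightarrow> 'a transcript
               \<Rightarrow> 'a dist \<times> (nat \<Rightarrow> 'a dist)).
     \<forall>n Sp u L lam Orc.
       finite_game n Sp \<longrightarrow> L \<subseteq> {..<n} \<longrightarrow> (\<forall>p\<in>L. 0 \<le> lam p \<and> lam p \<le> 1) \<longrightarrow>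
       stability_oracle n Sp u Orc \<longrightarrow>
       (let tr = run (nxt n Sp L lam) Orc (card L + 2) [] in
          nxt n Sp L lam tr = None \<and>
          (\<exists>x\<in>XSCE n Sp u L.
             x [] = fst (out n Sp L lam tr) \<and>
             (\<forall>p\<in>L. x [p] = snd (out n Sp L lam tr) p) \<and>
             (\<forall>y\<in>XSCE n Sp u L. f_lambda n Sp u L lam y \<le> f_lambda n Sp u L lam x)))"
  using sce_algorithm_correct
  by (intro exI[of _ "\<lambda>_ _. sce_next"] exI[of _ "\<lambda>_ _ L _. sce_output L"] allI impI) simp

end
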